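(* Let $m,n\ge1$. Every $A\in\mathbb{R}^{m\times n}$ can be written as $A=B+C$ with $B,C\in\mathscr{L}_{m,n}$.
   Context: $\Vert\cdot\Vert$ is the supremum norm; a real $m\times n$ matrix $A$ is a Liouville matrix if $A\mathbf{q}-\mathbf{p}\neq\mathbf{0}$ for all nonzero $(\mathbf{q},\mathbf{p})\in\mathbb{Z}^n\times\mathbb{Z}^m$ and for every $N$ there exist $\mathbf{p}\in\mathbb{Z}^m$, $\mathbf{q}\in\mathbb{Z}^n\setminus\{\mathbf{0}\}$ with $\Vert A\mathbf{q}-\mathbf{p}\Vert<\Vert\mathbf{q}\Vert^{-N}$; $\mathscr{L}_{m,n}$ is the set of these. *)

theory Defs
  imports "HOL-Analysis.Analysis"
begin

definition supnorm :: "real ^ 'k \<Rightarrow> real" where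
  "supnorm v = Max (range (\<lambda>i. \<bar>v $ i\<bar>))"

definition ivec :: "int ^ 'k \<Rightarrow> real ^ 'k" where
  "ivec p = (\<chi> i. real_of_int (p $ i))"

text \<open>Liouville matrices: A is m x n (m = CARD('m), n = CARD('n)).\<close>
definition liouville_matrix :: "real ^ 'n ^ 'm \<Rightarrow> bool" where
  "liouville_matrix A \<longleftrightarrow>
     (\<forall>q :: int ^ 'n. \<forall>p :: int ^ 'm. (q, p) \<noteq> (0, 0) \<longrightarrow> A *v ivec q - ivec p \<noteq> 0) \<and>
     (\<forall>N :: nat. \<exists>p :: int ^ 'm. \<exists>q :: int ^ 'n. q \<noteq> 0 \<and>
        supnorm (A *v ivec q - ivec p) < supnorm (ivec q) powr (- real N))"

end

theory Submission
  imports Defs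
begin

text \<open>A matrix is Liouville exactly when it avoids each of the countably many closed sets
  \<open>{B. B q = p}\<close>, \<open>(q, p) \<noteq> 0\<close>, and lies in each of the open sets of matrices having an integer
  vector \<open>q\<close> with \<open>\<parallel>Bq - p\<parallel> < \<parallel>q\<parallel>\<^sup>-\<^sup>N\<close>. All these sets are open and dense: a hyperplane
  \<open>{B. B q = p}\<close> is nowhere dense, and rounding the entries of a matrix to multiples of \<open>1/d\<close>
  produces an exact relation \<open>B (d e\<^sub>j) = p\<close>. Hence the Liouville matrices form a dense \<open>G\<^sub>\<delta>\<close>
  set \<open>\<L>\<close>, and so does \<open>A - \<L>\<close>; by Baire's theorem the two meet, giving \<open>B \<in> \<L>\<close> with
  \<open>A - B \<in> \<L>\<close>.\<close>

lemma isCont_matrix_vector_mult_matrix: "isCont (\<lambda>B::real^'n^'m. B *v x) B0"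
proof -
  have "linear (\<lambda>B::real^'n^'m. B *v x)"
    by (rule linearI)
      (auto simp: matrix_vector_mult_def vec_eq_iff sum.distrib sum_distrib_left algebra_simps)
  then show ?thesis
    by (intro linear_continuous_at) (simp add: linear_conv_bounded_linear)
qed

lemma supnorm_less_iff: "supnorm v < c \<longleftrightarrow> (\<forall>i. \<bar>v $ i\<bar> < c)"
  unfolding supnorm_def by (subst Max_less_iff) auto

lemma abs_component_le_supnorm: "\<bar>v $ i\<bar> \<le> supnorm v"
  unfolding supnorm_def by (rule Max_ge) auto

lemma norm_le_sum_abs_entries: "norm (M::real^'n^'m) \<le> (\<Sum>i\<in>UNIV. \<Sum>j\<in>UNIV. \<bar>M$i$j\<bar>)"
proof -
  have "norm M \<le> (\<Sum>i\<in>UNIV. norm (M$i))"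
    by (simp add: norm_vec_def L2_set_le_sum)
  also have "\<dots> \<le> (\<Sum>i\<in>UNIV. \<Sum>j\<in>UNIV. \<bar>M$i$j\<bar>)"
    by (intro sum_mono norm_le_l1_cart)
  finally show ?thesis .
qed

definition nonresonant_matrices :: "int^'n \<Rightarrow> int^'m \<Rightarrow> (real^'n^'m) set" where
  "nonresonant_matrices q p = {B. B *v ivec q \<noteq> ivec p}"

definition approximable_matrices :: "nat \<Rightarrow> (real^'n^'m) set" where
  "approximable_matrices N =
     {B. \<exists>p q. q \<noteq> 0 \<and> supnorm (B *v ivec q - ivec p) < supnorm (ivec q) powr (- real N)}"

definition liouville_conditions :: "(real^'n^'m) set set" where
  "liouville_conditions =
     (\<lambda>(q, p). nonresonant_matrices q p) ` (- {(0, 0)}) \<union> range approximable_matrices"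

lemma liouville_matrix_iff_Inter_conditions:
  "liouville_matrix B \<longleftrightarrow> B \<in> \<Inter> liouville_conditions"
  by (auto simp: liouville_matrix_def liouville_conditions_def nonresonant_matrices_def
      approximable_matrices_def)

lemma countable_liouville_conditions: "countable liouville_conditions"
  unfolding liouville_conditions_def by auto

lemma open_nonresonant_matrices: "open (nonresonant_matrices q p)"
proof -
  have "nonresonant_matrices q p = (\<lambda>B. B *v ivec q) -` (- {ivec p})"
    by (auto simp: nonresonant_matrices_def)
  also have "open \<dots>"
    by (intro continuous_open_vimage open_Compl closed_singleton continuous_intros
        isCont_matrix_vector_mult_matrix)
  finally show ?thesis .
qed

lemma open_approximable_matrices: "open (approximable_matrices N :: (real^'n^'m) set)"
proof -
  define S where
    "S p q = {B :: real^'n^'m. supnorm (B *v ivec q - ivec p) < supnorm (ivec q) powr (- real N)}"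
    for p q
  have "approximable_matrices N = (\<Union>p. \<Union>q\<in>-{0}. S p q)"
    by (auto simp: approximable_matrices_def S_def)
  moreover have "open (S p q)" for p q
  proof -
    have "S p q = (\<Inter>i. {B. \<bar>(B *v ivec q - ivec p) $ i\<bar> < supnorm (ivec q) powr (- real N)})"
      by (auto simp: S_def supnorm_less_iff)
    also have "open \<dots>"
      by (intro open_INT[OF finite_class.finite_UNIV] ballI open_Collect_less
          continuous_at_imp_continuous_on continuous_intros isCont_matrix_vector_mult_matrix)
    finally show ?thesis .
  qed
  ultimately show ?thesis
    by (simp add: open_UN)
qed

lemma dense_nonresonant_matrices:
  fixes q :: "int^'n" and p :: "int^'m"
  assumes "(q, p) \<noteq> (0, 0)"
  shows "closure (nonresonant_matrices q p) = UNIV"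
proof -
  have "\<exists>Y \<in> nonresonant_matrices q p. dist Y X < e" if "e > 0" for X :: "real^'n^'m" and e
  proof (cases "X \<in> nonresonant_matrices q p")
    case True
    then show ?thesis
      using \<open>e > 0\<close> by (intro bexI[of _ X]) simp_all
  next
    case False
    then have X: "X *v ivec q = ivec p" by (simp add: nonresonant_matrices_def)
    have "q \<noteq> 0"
    proof
      assume "q = 0"
      then have "ivec p = 0"
        using X by (simp add: ivec_def vec_eq_iff matrix_vector_mult_def)
      then show False
        using \<open>q = 0\<close> assms by (simp add: ivec_def vec_eq_iff)
    qed
    then obtain j where qj: "q $ j \<noteq> 0" by (auto simp: vec_eq_iff)
    \<comment> \<open>Move every entry of column \<open>j\<close> by \<open>t\<close>; this shifts \<open>X q\<close> by \<open>t q\<^sub>j\<close> in each coordinate.\<close>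
    define E :: "real^'n^'m" where "E = (\<chi> i k. of_bool (k = j))"
    define t where "t = e / (norm E + 1)"
    define Y where "Y = X + t *\<^sub>R E"
    have "norm E + 1 > 0"
      by (simp add: add_nonneg_pos)
    then have t: "t > 0" "t * norm E < e"
      using \<open>e > 0\<close> by (simp_all add: t_def pos_divide_less_eq)
    have "(E *v v) $ i = v $ j" for v :: "real^'n" and i
      by (simp add: E_def matrix_vector_mult_def)
    then have "(Y *v ivec q) $ i = ivec p $ i + t * real_of_int (q $ j)" for i
      by (simp add: Y_def X[symmetric] matrix_vector_mult_add_rdistrib
          flip: scaleR_matrix_vector_assoc)
        (simp add: ivec_def)
    then have "Y \<in> nonresonant_matrices q p"
      using t qj by (auto simp: nonresonant_matrices_def vec_eq_iff)
    moreover have "dist Y X < e"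
      using t by (simp add: Y_def dist_norm)
    ultimately show ?thesis by blast
  qed
  then show ?thesis by (auto simp: closure_approachable)
qed

text \<open>Rounding to the grid \<open>\<int>\<^sup>m\<^sup>\<times>\<^sup>n/d\<close> gives \<open>Y (d e\<^sub>j) \<in> \<int>\<^sup>m\<close> exactly, so \<open>Y\<close> is approximable to
  every order, while \<open>dist Y X \<le> mn/d\<close>.\<close>

lemma dense_approximable_matrices:
  "closure (approximable_matrices N :: (real^'n^'m) set) = UNIV"
proof -
  have "\<exists>Y \<in> approximable_matrices N. dist Y X < e" if "e > 0" for X :: "real^'n^'m" and e
  proof -
    define K where "K = real (CARD('m) * CARD('n))"
    define d where "d = nat \<lceil>K / e\<rceil> + 1"
    have d: "real d > K / e" "d \<ge> 1"
      using real_nat_ceiling_ge[of "K / e"] by (simp_all add: d_def)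
    then have d_pos: "real d > 0" by simp
    define Y :: "real^'n^'m" where "Y = (\<chi> i j. of_int \<lfloor>real d * X$i$j\<rfloor> / real d)"
    define j0 :: 'n where "j0 = undefined"
    define q :: "int^'n" where "q = (\<chi> j. if j = j0 then int d else 0)"
    define p :: "int^'m" where "p = (\<chi> i. \<lfloor>real d * X$i$j0\<rfloor>)"
    have "q \<noteq> 0"
      using d by (auto simp: q_def vec_eq_iff)
    have "(Y *v ivec q) $ i = real_of_int \<lfloor>real d * X$i$j0\<rfloor>" for i
      using d_pos by (simp add: matrix_vector_mult_def ivec_def q_def Y_def if_distrib cong: if_cong)
    then have "Y *v ivec q - ivec p = 0"
      by (simp add: vec_eq_iff ivec_def p_def)
    moreover have "supnorm (ivec q) > 0"
      using abs_component_le_supnorm[of "ivec q" j0] d_pos by (simp add: ivec_def q_def)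
    ultimately have "Y \<in> approximable_matrices N"
      using \<open>q \<noteq> 0\<close> unfolding approximable_matrices_def
      by (auto simp: supnorm_def intro!: exI[of _ p] exI[of _ q])
    moreover have "dist Y X < e"
    proof -
      have entry: "\<bar>(Y - X)$i$j\<bar> \<le> 1 / real d" for i j
      proof -
        have "(Y - X)$i$j = (real_of_int \<lfloor>real d * X$i$j\<rfloor> - real d * X$i$j) / real d"
          using d_pos by (simp add: Y_def field_simps)
        moreover have "\<bar>real_of_int \<lfloor>real d * X$i$j\<rfloor> - real d * X$i$j\<bar> \<le> 1"
          by linarith
        ultimately show ?thesis
          using d_pos by (simp add: abs_divide divide_right_mono)
      qed
      have "dist Y X \<le> (\<Sum>i\<in>UNIV. \<Sum>j\<in>UNIV. \<bar>(Y - X)$i$j\<bar>)"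
        unfolding dist_norm by (rule norm_le_sum_abs_entries)
      also have "\<dots> \<le> (\<Sum>i\<in>(UNIV::'m set). \<Sum>j\<in>(UNIV::'n set). 1 / real d)"
        by (intro sum_mono entry)
      also have "\<dots> = K / real d"
        by (simp add: K_def)
      also have "\<dots> < e"
        using d d_pos \<open>e > 0\<close> by (simp add: pos_divide_less_eq mult.commute)
      finally show ?thesis .
    qed
    ultimately show ?thesis by blast
  qed
  then show ?thesis by (auto simp: closure_approachable)
qed

lemma open_dense_liouville_conditions:
  assumes "T \<in> liouville_conditions"
  shows "open T \<and> closure T = UNIV"
proof -
  consider (nonresonant) q p where "(q, p) \<noteq> (0, 0)" "T = nonresonant_matrices q p"
    | (approximable) N where "T = approximable_matrices N"
    using assms by (auto simp: liouville_conditions_def)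
  then show ?thesis
    by cases (metis open_nonresonant_matrices dense_nonresonant_matrices,
        metis open_approximable_matrices dense_approximable_matrices)
qed

lemma Baire_difference_decomposition:
  fixes \<G> :: "'a::{real_normed_vector,heine_borel} set set"
  assumes "countable \<G>" and "\<And>T. T \<in> \<G> \<Longrightarrow> open T" and "\<And>T. T \<in> \<G> \<Longrightarrow> closure T = UNIV"
  shows "\<exists>B. B \<in> \<Inter>\<G> \<and> A - B \<in> \<Inter>\<G>"
proof -
  define \<H> where "\<H> = \<G> \<union> (\<lambda>T. (\<lambda>B. A - B) -` T) ` \<G>"
  have reflected: "open ((\<lambda>B. A - B) -` T) \<and> closure ((\<lambda>B. A - B) -` T) = UNIV"
    if "T \<in> \<G>" for T
  proof
    show "open ((\<lambda>B. A - B) -` T)"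
      by (intro continuous_open_vimage assms(2) that continuous_intros)
    have "\<exists>Y \<in> (\<lambda>B. A - B) -` T. dist Y X < e" if "e > 0" for X e
    proof -
      have "A - X \<in> closure T"
        using assms(3)[OF \<open>T \<in> \<G>\<close>] by simp
      then obtain Z where "Z \<in> T" "dist Z (A - X) < e"
        using \<open>e > 0\<close> closure_approachable by blast
      then show ?thesis
        by (intro bexI[of _ "A - Z"]) (auto simp: dist_norm norm_minus_commute algebra_simps)
    qed
    then show "closure ((\<lambda>B. A - B) -` T) = UNIV"
      by (auto simp: closure_approachable)
  qed
  have "UNIV \<subseteq> closure (\<Inter>\<H>)"
    by (rule Baire) (use assms reflected in \<open>auto simp: \<H>_def\<close>)
  then have "\<Inter>\<H> \<noteq> {}"
    by auto
  then obtain B where "B \<in> \<Inter>\<H>"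
    by blast
  then show ?thesis
    by (intro exI[of _ B]) (auto simp: \<H>_def)
qed

theorem mainTheorem8:
  fixes A :: "real ^ 'n ^ 'm"
  shows "\<exists>B C :: real ^ 'n ^ 'm. A = B + C \<and> liouville_matrix B \<and> liouville_matrix C"
proof -
  obtain B :: "real^'n^'m" where "B \<in> \<Inter> liouville_conditions" "A - B \<in> \<Inter> liouville_conditions"
    using Baire_difference_decomposition[OF countable_liouville_conditions]
      open_dense_liouville_conditions
    by blast
  then show ?thesis
    by (intro exI[of _ B] exI[of _ "A - B"]) (simp add: liouville_matrix_iff_Inter_conditions)
qed

end
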